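(* Let $f(x)=\frac1n\sum_{i=1}^n f_i(x)$ where each $f_i:\mathbb{R}^d\to\mathbb{R}$ is differentiable and $\mu_i$-strongly convex with $\mu_i>0$, and let $x_\star$ be the minimizer of $f$. Let $p_1,\dots,p_n>0$ with $\sum_i p_i=1$, and define $$\mu_{\rm NS}:=\min_i\frac{\mu_i}{np_i},\qquad \sigma_{\star,\rm NS}^2:=\frac1n\sum_{i=1}^n\frac{1}{np_i}\|\nabla f_i(x_\star)\|^2.$$ Consider SPPM-NS: starting from arbitrary $x_0\in\mathbb{R}^d$, at each step $k$ choose $i_k=i$ with probability $p_i$ (independently of the past) and set $x_{k+1}=\operatorname{prox}_{\frac{\gamma}{np_{i_k}}f_{i_k}}(x_k)$. Then for any $\gamma>0$ and $k\ge 0$, $$\mathbb{E}\|x_k-x_\star\|^2\le\left(\frac{1}{1+\gamma\mu_{\rm NS}}\right)^{2k}\|x_0-x_\star\|^2+\frac{\gamma\sigma_{\star,\rm NS}^2}{\gamma\mu_{\rm NS}^2+2\mu_{\rm NS}}.$$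
   Context: $\operatorname{prox}_{\gamma\phi}(y):=\arg\min_{x\in\mathbb{R}^d}\{\phi(x)+\frac{1}{2\gamma}\|x-y\|^2\}$. $\mu$-strong convexity of $g$: $g(y)+\langle\nabla g(y),x-y\rangle+\frac{\mu}{2}\|x-y\|^2\le g(x)$ for all $x,y$. *)

theory Defs
  imports "HOL-Analysis.Analysis"
begin

text \<open>Proximal operator: prox_{gamma phi}(y) = argmin_x { phi x + 1/(2 gamma) ||x - y||^2 }
  (the unique minimizer, when it exists).\<close>
definition prox :: "real \<Rightarrow> ('a::real_normed_vector \<Rightarrow> real) \<Rightarrow> 'a \<Rightarrow> 'a" where
  "prox \<gamma> \<phi> y = (THE x. \<forall>z. \<phi> x + (1 / (2*\<gamma>)) * (norm (x - y))^2
                              \<le> \<phi> z + (1 / (2*\<gamma>)) * (norm (z - y))^2)"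

definition strongly_convex_grad :: "real \<Rightarrow> ('a::real_inner \<Rightarrow> real) \<Rightarrow> ('a \<Rightarrow> 'a) \<Rightarrow> bool" where
  "strongly_convex_grad \<mu> g grad_g \<longleftrightarrow>
     (\<forall>x y. g y + inner (grad_g y) (x - y) + (\<mu>/2) * (norm (x - y))^2 \<le> g x)"

definition sppm_ns_iter :: "real \<Rightarrow> nat \<Rightarrow> (nat \<Rightarrow> real) \<Rightarrow> (nat \<Rightarrow> 'a::real_normed_vector \<Rightarrow> real)
    \<Rightarrow> 'a \<Rightarrow> nat list \<Rightarrow> 'a" where
  "sppm_ns_iter \<gamma> n p f x0 is = foldl (\<lambda>x i. prox (\<gamma> / (real n * p i)) (f i) x) x0 is"

text \<open>E ||x_k - x_star||^2 where i_0,...,i_{k-1} are i.i.d. with P(i_j = i) = p i, i < n: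
  the expectation written as the finite sum over all index sequences of length k.\<close>
definition sppm_ns_expected_sqdist :: "real \<Rightarrow> nat \<Rightarrow> (nat \<Rightarrow> real) \<Rightarrow> (nat \<Rightarrow> 'a::real_normed_vector \<Rightarrow> real)
    \<Rightarrow> 'a \<Rightarrow> 'a \<Rightarrow> nat \<Rightarrow> real" where
  "sppm_ns_expected_sqdist \<gamma> n p f x0 xs k =
     (\<Sum>is \<in> {is. length is = k \<and> set is \<subseteq> {..<n}}.
        prod_list (map p is) * (norm (sppm_ns_iter \<gamma> n p f x0 is - xs))^2)"

end

theory Submission imports Defs begin

(* The prox point x' = prox t \<phi> y of a differentiable \<mu>-strongly convex \<phi> solves the
   implicit gradient step x' = y - t \<nabla>\<phi>(x'), so strong monotonicity of \<nabla>\<phi> gives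
   (1 + t \<mu>) |x' - x\<^sub>\<star>| \<le> |y - x\<^sub>\<star> - t \<nabla>\<phi>(x\<^sub>\<star>)|. For the steps t = \<gamma>/(n p\<^sub>i), the p-weighted
   average of the squared right-hand sides has no cross term because \<Sum>\<^sub>i \<nabla>f\<^sub>i(x\<^sub>\<star>) = 0, whence
   E|x\<^sub>k\<^sub>+\<^sub>1 - x\<^sub>\<star>|\<^sup>2 \<le> c (E|x\<^sub>k - x\<^sub>\<star>|\<^sup>2 + \<gamma>\<^sup>2 \<sigma>\<^sup>2) with c = (1 + \<gamma> \<mu>\<^sub>N\<^sub>S)\<^sup>-\<^sup>2. Unrolling this affine
   recursion gives the bound; its constant term is the fixed point of the recursion. *)

lemma strongly_convex_grad_monotone:
  assumes "strongly_convex_grad m g G"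
  shows "m * (norm (a - b))^2 \<le> inner (G a - G b) (a - b)"
proof -
  have "g b + inner (G b) (a - b) + (m/2) * (norm (a - b))^2 \<le> g a"
    and "g a + inner (G a) (b - a) + (m/2) * (norm (b - a))^2 \<le> g b"
    using assms unfolding strongly_convex_grad_def by blast+
  moreover have "norm (b - a) = norm (a - b)" by (rule norm_minus_commute)
  moreover have "inner (G a) (b - a) = - inner (G a) (a - b)"
    by (metis inner_minus_right minus_diff_eq)
  ultimately show ?thesis by (simp add: inner_diff_left algebra_simps)
qed

lemma gradient_eq_0_at_global_min:
  fixes \<phi> :: "'a::real_inner \<Rightarrow> real"
  assumes "(\<phi> has_derivative (\<lambda>h. inner g h)) (at x)" and "\<And>z. \<phi> x \<le> \<phi> z"
  shows "g = 0"
proof -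
  have "(\<lambda>h. inner g h) = (\<lambda>h. 0)"
    using has_derivative_local_min[OF assms(1)] assms(2) by (simp add: always_eventually)
  then have "inner g g = 0" by metis
  then show ?thesis by simp
qed

definition minimizes_prox_objective ::
    "real \<Rightarrow> ('a::real_normed_vector \<Rightarrow> real) \<Rightarrow> 'a \<Rightarrow> 'a \<Rightarrow> bool" where
  "minimizes_prox_objective t \<phi> y x \<longleftrightarrow>
     (\<forall>z. \<phi> x + (1 / (2*t)) * (norm (x - y))^2 \<le> \<phi> z + (1 / (2*t)) * (norm (z - y))^2)"

lemma minimizes_prox_objective_gradient:
  fixes \<phi> :: "'a::real_inner \<Rightarrow> real"
  assumes "(\<phi> has_derivative (\<lambda>h. inner (G x) h)) (at x)"
    and "minimizes_prox_objective t \<phi> y x"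
  shows "G x = (1/t) *\<^sub>R (y - x)"
proof -
  let ?obj = "\<lambda>z. \<phi> z + (1 / (2*t)) * inner (z - y) (z - y)"
  have "(?obj has_derivative
          (\<lambda>h. inner (G x) h + (1 / (2*t)) * (inner h (x - y) + inner (x - y) h))) (at x)"
    by (intro derivative_eq_intros) (use assms(1) in auto)
  moreover have "(\<lambda>h. inner (G x) h + (1 / (2*t)) * (inner h (x - y) + inner (x - y) h))
               = (\<lambda>h. inner (G x + (1/t) *\<^sub>R (x - y)) h)"
    by (simp add: inner_add_right inner_commute)
  ultimately have "(?obj has_derivative (\<lambda>h. inner (G x + (1/t) *\<^sub>R (x - y)) h)) (at x)"
    by simp
  moreover have "?obj x \<le> ?obj z" for z
    using assms(2) by (simp add: minimizes_prox_objective_def power2_norm_eq_inner)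
  ultimately have "G x + (1/t) *\<^sub>R (x - y) = 0"
    by (rule gradient_eq_0_at_global_min)
  then show ?thesis by (simp add: algebra_simps eq_neg_iff_add_eq_0 scaleR_diff_right)
qed

lemma minimizes_prox_objective_exists:
  fixes \<phi> :: "'a::euclidean_space \<Rightarrow> real"
  assumes deriv: "\<And>x. (\<phi> has_derivative (\<lambda>h. inner (G x) h)) (at x)"
    and sc: "strongly_convex_grad m \<phi> G" and m: "0 \<le> m" and t: "0 < t"
  shows "\<exists>x. minimizes_prox_objective t \<phi> y x"
proof -
  define obj where "obj = (\<lambda>z. \<phi> z + (1 / (2*t)) * (norm (z - y))^2)"
  define R where "R = 2 * t * norm (G y) + 1"
  have "continuous_on (cball y R) obj"
    unfolding obj_def
    by (intro continuous_at_imp_continuous_on ballI continuous_intros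
        has_derivative_continuous[OF deriv])
  moreover have y_in: "y \<in> cball y R" using t by (simp add: R_def)
  ultimately obtain x where x: "x \<in> cball y R" "\<forall>z\<in>cball y R. obj x \<le> obj z"
    using continuous_attains_inf[OF compact_cball] by blast
  \<comment> \<open>outside the ball, the quadratic term beats the linear lower bound of \<open>\<phi>\<close> at \<open>y\<close>\<close>
  have far: "obj y < obj z" if "z \<notin> cball y R" for z
  proof -
    define r where "r = norm (z - y)"
    have rR: "R < r" using that by (simp add: r_def dist_norm norm_minus_commute)
    have "\<phi> y + inner (G y) (z - y) + (m/2) * r^2 \<le> \<phi> z"
      using sc unfolding strongly_convex_grad_def r_def by blast
    moreover have "- (norm (G y) * r) \<le> inner (G y) (z - y)"
      using norm_cauchy_schwarz[of "G y" "y - z"] unfolding r_def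
      by (simp add: inner_diff_right norm_minus_commute)
    moreover have "norm (G y) * r < r^2 / (2*t)"
    proof -
      have "0 \<le> 2 * t * norm (G y)" using t by simp
      then have "2 * t * norm (G y) * r < r * r"
        using rR by (intro mult_strict_right_mono) (auto simp: R_def)
      then show ?thesis using t by (simp add: field_simps power2_eq_square)
    qed
    moreover have "0 \<le> (m/2) * r^2" using m by simp
    moreover have "obj z = \<phi> z + r^2 / (2*t)" "obj y = \<phi> y"
      by (simp_all add: obj_def r_def)
    ultimately show ?thesis by linarith
  qed
  have "obj x \<le> obj z" for z
    using x far[of z] y_in by (cases "z \<in> cball y R") fastforce+
  then show ?thesis unfolding minimizes_prox_objective_def obj_def by blast
qed

lemma implicit_gradient_step_dist_le:
  fixes G :: "'a::real_inner \<Rightarrow> 'a"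
  assumes sc: "strongly_convex_grad m \<phi> G" and t: "0 < t"
    and step: "G x = (1/t) *\<^sub>R (y - x)"
  shows "(1 + t * m) * norm (x - z) \<le> norm (y - z - t *\<^sub>R G z)"
proof -
  define d where "d = x - z"
  define w where "w = y - z - t *\<^sub>R G z"
  have "G x - G z = (1/t) *\<^sub>R (w - d)"
    using step t by (simp add: w_def d_def algebra_simps)
  then have "m * (norm d)^2 \<le> (1/t) * inner (w - d) d"
    using strongly_convex_grad_monotone[OF sc, of x z] by (simp add: d_def)
  then have "t * m * (norm d)^2 \<le> inner (w - d) d"
    using t by (simp add: field_simps)
  then have "(1 + t * m) * (norm d)^2 \<le> inner w d"
    by (simp add: inner_diff_left power2_norm_eq_inner algebra_simps)
  also have "\<dots> \<le> norm w * norm d" by (rule norm_cauchy_schwarz)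
  finally have "(1 + t * m) * norm d * norm d \<le> norm w * norm d"
    by (simp add: power2_eq_square mult.assoc)
  then have "(1 + t * m) * norm d \<le> norm w"
    by (cases "d = 0") (simp_all add: mult_le_cancel_right)
  then show ?thesis by (simp add: d_def w_def)
qed

lemma prox_gradient_eq:
  fixes \<phi> :: "'a::euclidean_space \<Rightarrow> real"
  assumes deriv: "\<And>x. (\<phi> has_derivative (\<lambda>h. inner (G x) h)) (at x)"
    and sc: "strongly_convex_grad m \<phi> G" and m: "0 \<le> m" and t: "0 < t"
  shows "G (prox t \<phi> y) = (1/t) *\<^sub>R (y - prox t \<phi> y)"
proof -
  obtain x where x: "minimizes_prox_objective t \<phi> y x"
    using minimizes_prox_objective_exists[OF deriv sc m t] by blast
  have grad_x: "G x = (1/t) *\<^sub>R (y - x)"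
    using deriv x by (rule minimizes_prox_objective_gradient)
  have unique: "x' = x" if x': "minimizes_prox_objective t \<phi> y x'" for x'
  proof -
    have "G x' = (1/t) *\<^sub>R (y - x')"
      using deriv x' by (rule minimizes_prox_objective_gradient)
    from implicit_gradient_step_dist_le[OF sc t this, of x]
    have "(1 + t * m) * norm (x' - x) \<le> 0"
      using grad_x t by simp
    moreover have "0 < 1 + t * m" using t m by (simp add: add_pos_nonneg)
    ultimately show ?thesis by (simp add: mult_le_0_iff)
  qed
  have "minimizes_prox_objective t \<phi> y (prox t \<phi> y)"
    unfolding prox_def minimizes_prox_objective_def[symmetric]
    by (rule theI[where P = "minimizes_prox_objective t \<phi> y", OF x unique])
  then show ?thesis by (rule minimizes_prox_objective_gradient[OF deriv])
qed

lemma prox_dist_le: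
  fixes \<phi> :: "'a::euclidean_space \<Rightarrow> real"
  assumes deriv: "\<And>x. (\<phi> has_derivative (\<lambda>h. inner (G x) h)) (at x)"
    and sc: "strongly_convex_grad m \<phi> G" and m: "0 \<le> m" and t: "0 < t"
  shows "(1 + t * m) * norm (prox t \<phi> y - z) \<le> norm (y - z - t *\<^sub>R G z)"
  using implicit_gradient_step_dist_le[OF sc t prox_gradient_eq[OF deriv sc m t]] .

lemma sum_gradients_eq_0_at_min:
  fixes f :: "nat \<Rightarrow> 'a::real_inner \<Rightarrow> real"
  assumes "\<And>i. i < n \<Longrightarrow> (f i has_derivative (\<lambda>h. inner (G i x) h)) (at x)"
    and "\<And>z. (\<Sum>i<n. f i x) \<le> (\<Sum>i<n. f i z)"
  shows "(\<Sum>i<n. G i x) = 0"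
proof (rule gradient_eq_0_at_global_min)
  show "((\<lambda>z. \<Sum>i<n. f i z) has_derivative (\<lambda>h. inner (\<Sum>i<n. G i x) h)) (at x)"
    using has_derivative_sum[of "{..<n}" f "\<lambda>i h. inner (G i x) h"] assms(1)
    by (simp add: inner_sum_left)
qed (use assms(2) in simp)

lemma weighted_sum_sqnorm_diff:
  fixes v :: "'a::real_inner" and g :: "nat \<Rightarrow> 'a"
  assumes p_sum: "(\<Sum>i<n. p i) = 1" and g_sum: "(\<Sum>i<n. g i) = 0"
    and pt: "\<And>i. i < n \<Longrightarrow> p i * t i = s"
  shows "(\<Sum>i<n. p i * (norm (v - t i *\<^sub>R g i))^2)
       = (norm v)^2 + (\<Sum>i<n. p i * (t i)^2 * (norm (g i))^2)"
proof -
  have expand: "p i * (norm (v - t i *\<^sub>R g i))^2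
      = p i * (norm v)^2 - 2 * s * inner v (g i) + p i * (t i)^2 * (norm (g i))^2"
    if "i < n" for i
  proof -
    have "(norm (v - w))^2 = (norm v)^2 - 2 * inner v w + (norm w)^2" for w
      by (simp add: power2_norm_eq_inner inner_diff_left inner_diff_right inner_commute)
    then have norm_eq: "(norm (v - t i *\<^sub>R g i))^2
        = (norm v)^2 - 2 * t i * inner v (g i) + (t i)^2 * (norm (g i))^2"
      by (simp add: power_mult_distrib)
    show ?thesis unfolding norm_eq pt[OF that, symmetric] by (simp add: algebra_simps)
  qed
  have "(\<Sum>i<n. 2 * s * inner v (g i)) = 2 * s * inner v (\<Sum>i<n. g i)"
    by (simp add: sum_distrib_left inner_sum_right)
  then show ?thesis
    using p_sum g_sum
    by (simp add: expand sum.distrib sum_subtractf sum_distrib_right[symmetric])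
qed

lemma sum_lists_length_Suc:
  assumes "finite A"
  shows "(\<Sum>ls\<in>{ls. length ls = Suc k \<and> set ls \<subseteq> A}. h ls)
       = (\<Sum>js\<in>{js. length js = k \<and> set js \<subseteq> A}. \<Sum>i\<in>A. h (js @ [i]))"
proof -
  let ?L = "{js. length js = k \<and> set js \<subseteq> A}"
  have lists_Suc: "{ls. length ls = Suc k \<and> set ls \<subseteq> A} = (\<lambda>(js, i). js @ [i]) ` (?L \<times> A)"
    by (auto simp: length_Suc_conv_rev image_iff)
  have inj: "inj_on (\<lambda>(js, i). js @ [i]) (?L \<times> A)"
    by (auto simp: inj_on_def)
  have "finite ?L"
    using finite_lists_length_eq[OF assms, of k] by (simp add: conj_commute)
  then show ?thesis
    unfolding lists_Suc sum.reindex[OF inj]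
    using sum.cartesian_product[of "\<lambda>js i. h (js @ [i])" A ?L] by (simp add: split_beta)
qed

lemma sum_prod_list_lists_length:
  fixes p :: "nat \<Rightarrow> 'a::comm_semiring_1"
  shows "(\<Sum>ls\<in>{ls. length ls = k \<and> set ls \<subseteq> {..<n}}. prod_list (map p ls)) = (\<Sum>i<n. p i) ^ k"
proof (induction k)
  case 0
  have "{ls. length ls = 0 \<and> set ls \<subseteq> {..<n}} = {[]}" by auto
  then show ?case by simp
next
  case (Suc k)
  have "(\<Sum>js\<in>{js. length js = k \<and> set js \<subseteq> {..<n}}. \<Sum>i<n. prod_list (map p (js @ [i])))
      = (\<Sum>js\<in>{js. length js = k \<and> set js \<subseteq> {..<n}}. prod_list (map p js)) * (\<Sum>i<n. p i)"
    by (simp add: sum_product)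
  then show ?case
    unfolding sum_lists_length_Suc[OF finite_lessThan] using Suc.IH by (simp add: mult.commute)
qed

lemma expected_foldl_le:
  fixes T :: "nat \<Rightarrow> 'b \<Rightarrow> 'b" and V :: "'b \<Rightarrow> real"
  assumes p_nonneg: "\<And>i. i < n \<Longrightarrow> 0 \<le> p i" and p_sum: "(\<Sum>i<n. p i) = 1"
    and step: "\<And>x. (\<Sum>i<n. p i * V (T i x)) \<le> c * V x + b"
    and c: "0 \<le> c" and B: "0 \<le> B" "c * B + b \<le> B"
  shows "(\<Sum>ls\<in>{ls. length ls = k \<and> set ls \<subseteq> {..<n}}.
            prod_list (map p ls) * V (foldl (\<lambda>x i. T i x) x0 ls)) \<le> c ^ k * V x0 + B"
proof (induction k)
  case 0
  have "{ls. length ls = 0 \<and> set ls \<subseteq> {..<n}} = {[]}" by auto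
  then show ?case using B by simp
next
  case (Suc k)
  let ?L = "{ls. length ls = k \<and> set ls \<subseteq> {..<n}}"
  let ?X = "\<lambda>ls. foldl (\<lambda>x i. T i x) x0 ls"
  have total: "(\<Sum>js\<in>?L. prod_list (map p js)) = 1"
    unfolding sum_prod_list_lists_length p_sum by simp
  have "(\<Sum>ls\<in>{ls. length ls = Suc k \<and> set ls \<subseteq> {..<n}}. prod_list (map p ls) * V (?X ls))
      = (\<Sum>js\<in>?L. prod_list (map p js) * (\<Sum>i<n. p i * V (T i (?X js))))"
    by (simp add: sum_lists_length_Suc sum_distrib_left mult.assoc)
  also have "\<dots> \<le> (\<Sum>js\<in>?L. prod_list (map p js) * (c * V (?X js) + b))"
    using p_nonneg by (intro sum_mono mult_left_mono step prod_list_nonneg) auto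
  also have "\<dots> = c * (\<Sum>js\<in>?L. prod_list (map p js) * V (?X js))
                   + b * (\<Sum>js\<in>?L. prod_list (map p js))"
    by (simp add: algebra_simps sum.distrib sum_distrib_left)
  also have "\<dots> = c * (\<Sum>js\<in>?L. prod_list (map p js) * V (?X js)) + b"
    by (simp add: total)
  also have "\<dots> \<le> c * (c ^ k * V x0 + B) + b"
    using Suc c by (simp add: mult_left_mono)
  also have "\<dots> \<le> c ^ Suc k * V x0 + B"
    using B by (simp add: algebra_simps)
  finally show ?case .
qed

lemma sppm_ns_one_step_le:
  fixes f :: "nat \<Rightarrow> 'a::euclidean_space \<Rightarrow> real" and grad :: "nat \<Rightarrow> 'a \<Rightarrow> 'a"
  assumes grad: "\<And>i x. i < n \<Longrightarrow> (f i has_derivative (\<lambda>h. inner (grad i x) h)) (at x)"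
    and sconv: "\<And>i. i < n \<Longrightarrow> strongly_convex_grad (\<mu> i) (f i) (grad i)"
    and p_pos: "\<And>i. i < n \<Longrightarrow> 0 < p i" and p_sum: "(\<Sum>i<n. p i) = 1"
    and grad_sum: "(\<Sum>i<n. grad i xs) = 0"
    and \<gamma>: "0 < \<gamma>" and mu: "0 \<le> mu" and mu_le: "\<And>i. i < n \<Longrightarrow> mu \<le> \<mu> i / (real n * p i)"
  shows "(\<Sum>i<n. p i * (norm (prox (\<gamma> / (real n * p i)) (f i) x - xs))^2)
         \<le> (1 / (1 + \<gamma> * mu))^2 * ((norm (x - xs))^2
              + \<gamma>^2 * ((1 / real n) * (\<Sum>i<n. (1 / (real n * p i)) * (norm (grad i xs))^2)))"
proof -
  define t where "t i = \<gamma> / (real n * p i)" for i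
  define c where "c = (1 / (1 + \<gamma> * mu))^2"
  have n: "0 < real n" using p_sum by (cases n) auto
  have each: "(norm (prox (t i) (f i) x - xs))^2 \<le> c * (norm (x - xs - t i *\<^sub>R grad i xs))^2"
    if i: "i < n" for i
  proof -
    have t: "0 < t i" using \<gamma> p_pos[OF i] n by (simp add: t_def)
    have "0 \<le> \<mu> i / (real n * p i)" using mu_le[OF i] mu by linarith
    moreover have "0 < real n * p i" using p_pos[OF i] n by simp
    ultimately have \<mu>_nonneg: "0 \<le> \<mu> i" by (simp add: zero_le_divide_iff)
    have "\<gamma> * mu \<le> t i * \<mu> i"
      using mult_left_mono[OF mu_le[OF i], of \<gamma>] \<gamma> by (simp add: t_def)
    then have "(1 + \<gamma> * mu) * norm (prox (t i) (f i) x - xs)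
               \<le> (1 + t i * \<mu> i) * norm (prox (t i) (f i) x - xs)"
      by (intro mult_right_mono) simp_all
    also have "\<dots> \<le> norm (x - xs - t i *\<^sub>R grad i xs)"
      using grad[OF i] sconv[OF i] \<mu>_nonneg t by (rule prox_dist_le)
    finally have "(1 + \<gamma> * mu) * norm (prox (t i) (f i) x - xs)
                  \<le> norm (x - xs - t i *\<^sub>R grad i xs)" .
    moreover have "0 < 1 + \<gamma> * mu" using \<gamma> mu by (simp add: add_pos_nonneg)
    ultimately have "norm (prox (t i) (f i) x - xs)
                     \<le> (1 / (1 + \<gamma> * mu)) * norm (x - xs - t i *\<^sub>R grad i xs)"
      by (simp add: field_simps)
    then have "(norm (prox (t i) (f i) x - xs))^2
               \<le> ((1 / (1 + \<gamma> * mu)) * norm (x - xs - t i *\<^sub>R grad i xs))^2"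
      by (rule power_mono) simp
    then show ?thesis by (simp only: c_def power_mult_distrib)
  qed
  have p_ne: "p i \<noteq> 0" if "i < n" for i using p_pos[OF that] by simp
  have "(\<Sum>i<n. p i * (norm (prox (t i) (f i) x - xs))^2)
        \<le> c * (\<Sum>i<n. p i * (norm (x - xs - t i *\<^sub>R grad i xs))^2)"
    unfolding sum_distrib_left
    using p_pos by (intro sum_mono) (simp add: each mult.left_commute mult_left_mono less_imp_le)
  also have "(\<Sum>i<n. p i * (norm (x - xs - t i *\<^sub>R grad i xs))^2)
             = (norm (x - xs))^2 + (\<Sum>i<n. p i * (t i)^2 * (norm (grad i xs))^2)"
    by (rule weighted_sum_sqnorm_diff[OF p_sum grad_sum, where s = "\<gamma> / real n"])
       (simp add: t_def p_ne)
  also have "(\<Sum>i<n. p i * (t i)^2 * (norm (grad i xs))^2)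
             = \<gamma>^2 * ((1 / real n) * (\<Sum>i<n. (1 / (real n * p i)) * (norm (grad i xs))^2))"
    unfolding sum_distrib_left
    by (intro sum.cong) (simp_all add: t_def power2_eq_square field_simps p_ne)
  finally show ?thesis by (simp add: t_def c_def)
qed

lemma sppm_ns_bias_fixpoint:
  fixes \<gamma> \<mu> \<sigma> :: real
  assumes "0 < \<gamma>" "0 < \<mu>"
  shows "(1 / (1 + \<gamma> * \<mu>))^2 * (\<gamma> * \<sigma> / (\<gamma> * \<mu>^2 + 2 * \<mu>) + \<gamma>^2 * \<sigma>)
         = \<gamma> * \<sigma> / (\<gamma> * \<mu>^2 + 2 * \<mu>)"
proof -
  define D where "D = \<gamma> * \<mu>^2 + 2 * \<mu>"
  have D: "0 < D" and a: "0 < 1 + \<gamma> * \<mu>"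
    using assms by (simp_all add: D_def add_pos_pos)
  have a2: "(1 + \<gamma> * \<mu>)^2 = 1 + \<gamma> * D"
    by (simp add: D_def power2_eq_square algebra_simps)
  have "(1 / (1 + \<gamma> * \<mu>))^2 * (\<gamma> * \<sigma> / D + \<gamma>^2 * \<sigma>)
        = \<gamma> * \<sigma> * (1 + \<gamma> * D) / (D * (1 + \<gamma> * \<mu>)^2)"
    using D a by (simp add: field_simps power2_eq_square)
  also have "\<dots> = \<gamma> * \<sigma> / D"
    unfolding a2[symmetric] using a by simp
  finally show ?thesis by (simp add: D_def)
qed

theorem mainTheorem4:
  fixes n :: nat
    and f :: "nat \<Rightarrow> 'a::euclidean_space \<Rightarrow> real"
    and grad :: "nat \<Rightarrow> 'a \<Rightarrow> 'a"
    and \<mu> p :: "nat \<Rightarrow> real"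
    and xs x0 :: 'a
    and \<gamma> :: real and k :: nat
  assumes n_pos: "n \<ge> 1"
    and grad: "\<And>i x. i < n \<Longrightarrow> (f i has_derivative (\<lambda>h. inner (grad i x) h)) (at x)"
    and mu_pos: "\<And>i. i < n \<Longrightarrow> \<mu> i > 0"
    and sconv: "\<And>i. i < n \<Longrightarrow> strongly_convex_grad (\<mu> i) (f i) (grad i)"
    and xs_min: "\<And>x. (1 / real n) * (\<Sum>i<n. f i xs) \<le> (1 / real n) * (\<Sum>i<n. f i x)"
    and p_pos: "\<And>i. i < n \<Longrightarrow> p i > 0"
    and p_sum: "(\<Sum>i<n. p i) = 1"
    and gamma_pos: "\<gamma> > 0"
  shows "let \<mu>NS = Min ((\<lambda>i. \<mu> i / (real n * p i)) ` {..<n});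
             \<sigma>NS2 = (1 / real n) * (\<Sum>i<n. (1 / (real n * p i)) * (norm (grad i xs))^2)
         in sppm_ns_expected_sqdist \<gamma> n p f x0 xs k
            \<le> (1 / (1 + \<gamma> * \<mu>NS)) ^ (2*k) * (norm (x0 - xs))^2
              + \<gamma> * \<sigma>NS2 / (\<gamma> * \<mu>NS^2 + 2 * \<mu>NS)"
proof -
  define mu where "mu = Min ((\<lambda>i. \<mu> i / (real n * p i)) ` {..<n})"
  define sig where "sig = (1 / real n) * (\<Sum>i<n. (1 / (real n * p i)) * (norm (grad i xs))^2)"
  define c where "c = (1 / (1 + \<gamma> * mu))^2"
  define B where "B = \<gamma> * sig / (\<gamma> * mu^2 + 2 * mu)"
  have mu_le: "mu \<le> \<mu> i / (real n * p i)" if "i < n" for i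
    unfolding mu_def using that by (intro Min_le) auto
  have "mu \<in> (\<lambda>i. \<mu> i / (real n * p i)) ` {..<n}"
    unfolding mu_def using n_pos by (intro Min_in) (auto simp: lessThan_empty_iff)
  then have mu: "0 < mu" using mu_pos p_pos by force
  have "(\<Sum>i<n. f i xs) \<le> (\<Sum>i<n. f i z)" for z
    using xs_min[of z] n_pos by (simp add: divide_le_cancel)
  then have grad_sum: "(\<Sum>i<n. grad i xs) = 0"
    by (intro sum_gradients_eq_0_at_min[of n f grad]) (simp_all add: grad)
  have step: "(\<Sum>i<n. p i * (norm (prox (\<gamma> / (real n * p i)) (f i) x - xs))^2)
              \<le> c * (norm (x - xs))^2 + c * (\<gamma>^2 * sig)" for x
    using sppm_ns_one_step_le[OF grad sconv p_pos p_sum grad_sum gamma_pos less_imp_le[OF mu] mu_le]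
    unfolding c_def sig_def by (simp add: distrib_left)
  have "0 \<le> sig"
    unfolding sig_def using p_pos by (intro mult_nonneg_nonneg sum_nonneg) (auto simp: less_imp_le)
  then have B: "0 \<le> B" "c * B + c * (\<gamma>^2 * sig) = B"
    using sppm_ns_bias_fixpoint[OF gamma_pos mu, of sig] gamma_pos mu
    by (simp_all add: B_def c_def distrib_left add_pos_pos)
  have "sppm_ns_expected_sqdist \<gamma> n p f x0 xs k \<le> c ^ k * (norm (x0 - xs))^2 + B"
    unfolding sppm_ns_expected_sqdist_def sppm_ns_iter_def
    using p_pos B by (intro expected_foldl_le[where V = "\<lambda>x. (norm (x - xs))^2", OF _ p_sum step])
       (simp_all add: c_def less_imp_le)
  then show ?thesis
    unfolding Let_def mu_def[symmetric] sig_def[symmetric] by (simp add: c_def B_def power_mult)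
qed

end
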